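(* Let $V$ be an $n$-dimensional vector space over a field of characteristic zero, let $A^{a_1\dots a_p}$ and $B_{a_1\dots a_p}$ be $p$-forms with $A$ simple, and assume $n\neq 2p$. Let $T=T^a{}_b\{A,B\}=A^{ac_2\dots c_p}B_{bc_2\dots c_p}-\frac{1}{2p}A^{c_1\dots c_p}B_{c_1\dots c_p}\delta^a_b$. Then for every positive integer $k$, $$[T^k]=\begin{cases}\dfrac{n}{(n-2p)^k}[T]^k & \text{if $k$ is even},\\[2mm] \dfrac{1}{(n-2p)^{k-1}}[T]^k & \text{if $k$ is odd}.\end{cases}$$
   Context: Index-free notation: $T^k$ is the $k$-fold composition of the $(1,1)$-tensor $T^a{}_b$ with itself and $[X]=X^c{}_c$ denotes the trace. A $p$-form $A$ is simple if $A^{a_1\dots a_p}=u^{[a_1}\cdots w^{a_p]}$ for some vectors $u,\dots,w$. No metric is assumed. *)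

theory Defs
  imports Main "HOL-Combinatorics.Permutations" "HOL-Library.Cardinality"
begin

text \<open>Tensors on V = 'a^n with n = CARD('n), components w.r.t. a fixed basis indexed by 'n.
  A p-index array is a function on index lists; only lists of length p matter.\<close>

definition pform :: "nat \<Rightarrow> ('n list \<Rightarrow> 'a::field) \<Rightarrow> bool" where
  "pform p A \<longleftrightarrow> (\<forall>xs i j. length xs = p \<longrightarrow> i < p \<longrightarrow> j < p \<longrightarrow> i \<noteq> j \<longrightarrow>
      A (xs[i := xs ! j, j := xs ! i]) = - A xs)"

definition simple_form :: "nat \<Rightarrow> ('n list \<Rightarrow> 'a::field_char_0) \<Rightarrow> bool" where
  "simple_form p A \<longleftrightarrow> (\<exists>u :: nat \<Rightarrow> 'n \<Rightarrow> 'a. \<forall>xs. length xs = p \<longrightarrow>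
      A xs = (1 / fact p) * (\<Sum>\<sigma>\<in>{\<sigma>. \<sigma> permutes {..<p}}.
                 of_int (sign \<sigma>) * (\<Prod>i<p. u (\<sigma> i) (xs ! i))))"

definition full_contr :: "nat \<Rightarrow> ('n::finite list \<Rightarrow> 'a::field) \<Rightarrow> ('n list \<Rightarrow> 'a) \<Rightarrow> 'a" where
  "full_contr p A B = (\<Sum>cs\<in>{cs. length cs = p}. A cs * B cs)"

definition Tmat :: "nat \<Rightarrow> ('n::finite list \<Rightarrow> 'a::field) \<Rightarrow> ('n list \<Rightarrow> 'a) \<Rightarrow> 'n \<Rightarrow> 'n \<Rightarrow> 'a" where
  "Tmat p A B a b = (\<Sum>cs\<in>{cs. length cs = p - 1}. A (a # cs) * B (b # cs))
      - (1 / (2 * of_nat p)) * full_contr p A B * (if a = b then 1 else 0)"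

fun tpow :: "('n::finite \<Rightarrow> 'n \<Rightarrow> 'a::comm_ring_1) \<Rightarrow> nat \<Rightarrow> 'n \<Rightarrow> 'n \<Rightarrow> 'a" where
  "tpow T 0 a b = (if a = b then 1 else 0)"
| "tpow T (Suc k) a b = (\<Sum>c\<in>UNIV. T a c * tpow T k c b)"

definition tr :: "('n::finite \<Rightarrow> 'n \<Rightarrow> 'a::comm_ring_1) \<Rightarrow> 'a" where
  "tr M = (\<Sum>a\<in>UNIV. M a a)"

end

theory Submission
  imports Defs
begin

(* Write A = u_0 \<and> ... \<and> u_{p-1} and M^a_b = A^{a c_2..c_p} B_{b c_2..c_p}. Regrouping the
   antisymmetrisation by the vector that lands in the free slot gives M = (1/p) \<Sigma>_j u_j \<otimes> \<beta>_j,
   where \<beta>_j is B evaluated on u_0, ..., u_{p-1} with slot j left open. Since B is alternating,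
   \<beta>_j(u_l) vanishes for j \<noteq> l and equals B(u_0, ..., u_{p-1}) = [M] = A^{c..} B_{c..} =: s for
   j = l, so M\<^sup>2 = (s/p) M. With h = s/(2p) this says exactly that T = M - h \<delta> satisfies
   T\<^sup>2 = h\<^sup>2 \<delta>, so T^k is h^k \<delta> or h^(k-1) T according to the parity of k, while
   [T] = -h (n - 2p). *)

lemma sum_lists_length_Suc:
  "(\<Sum>xs\<in>{xs::'n::finite list. length xs = Suc m}. f xs) =
    (\<Sum>a\<in>UNIV. \<Sum>cs\<in>{cs. length cs = m}. f (a # cs))"
proof -
  have lists: "{xs::'n list. length xs = Suc m} = (\<lambda>(a, cs). a # cs) ` (UNIV \<times> {cs. length cs = m})"
    by (auto simp: length_Suc_conv image_iff)
  have "inj_on (\<lambda>(a::'n, cs). a # cs) (UNIV \<times> {cs. length cs = m})"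
    by (auto simp: inj_on_def)
  then show ?thesis
    unfolding lists by (simp add: sum.reindex sum.cartesian_product split_def)
qed

definition form_eval :: "nat \<Rightarrow> ('n::finite list \<Rightarrow> 'a::comm_ring_1) \<Rightarrow> (nat \<Rightarrow> 'n \<Rightarrow> 'a) \<Rightarrow> 'a" where
  "form_eval m B w = (\<Sum>xs\<in>{xs. length xs = m}. (\<Prod>i<m. w i (xs ! i)) * B xs)"

lemma form_eval_swap:
  fixes B :: "'n::finite list \<Rightarrow> 'a::field"
  assumes B: "pform m B" and ij: "i < m" "j < m" "i \<noteq> j"
  shows "form_eval m B (w \<circ> Transposition.transpose i j) = - form_eval m B w"
proof -
  let ?t = "Transposition.transpose i j"
  let ?L = "{xs::'n list. length xs = m}"
  define sw where "sw xs = xs[i := xs ! j, j := xs ! i]" for xs :: "'n list"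
  have sw_sw: "sw (sw xs) = xs" if "length xs = m" for xs
    using that ij unfolding sw_def by (simp add: list_eq_iff_nth_eq nth_list_update)
  have sw_length: "length (sw xs) = length xs" for xs
    unfolding sw_def by simp
  have "form_eval m B (w \<circ> ?t) = (\<Sum>xs\<in>?L. (\<Prod>k<m. w (?t k) (sw xs ! k)) * B (sw xs))"
    unfolding form_eval_def
    by (rule sum.reindex_bij_witness[of _ sw sw]) (auto simp: sw_sw sw_length)
  also have "\<dots> = (\<Sum>xs\<in>?L. - ((\<Prod>k<m. w k (xs ! k)) * B xs))"
  proof (rule sum.cong[OF refl])
    fix xs assume xs: "xs \<in> ?L"
    have "(\<Prod>k<m. w (?t k) (sw xs ! k)) = (\<Prod>k<m. w (?t k) (xs ! ?t k))"
      using xs ij by (intro prod.cong) (auto simp: sw_def nth_list_update transpose_def)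
    also have "\<dots> = (\<Prod>k<m. w k (xs ! k))"
      using prod.permute[OF permutes_swap_id[of i "{..<m}" j], of "\<lambda>k. w k (xs ! k)"] ij
      by (simp add: o_def)
    finally show "(\<Prod>k<m. w (?t k) (sw xs ! k)) * B (sw xs) = - ((\<Prod>k<m. w k (xs ! k)) * B xs)"
      using B xs ij unfolding pform_def sw_def by auto
  qed
  also have "\<dots> = - form_eval m B w"
    unfolding form_eval_def by (simp add: sum_negf)
  finally show ?thesis .
qed

lemma form_eval_permute:
  fixes B :: "'n::finite list \<Rightarrow> 'a::field"
  assumes B: "pform m B" and \<sigma>: "\<sigma> permutes {..<m}"
  shows "form_eval m B (w \<circ> \<sigma>) = of_int (sign \<sigma>) * form_eval m B w"
  using \<sigma> finite_lessThan[of m]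
proof (induction \<sigma> arbitrary: w rule: permutes_induct)
  case id
  then show ?case by (simp add: sign_id)
next
  case (swap i j \<sigma>)
  let ?t = "Transposition.transpose i j"
  have "permutation \<sigma>"
    using swap.hyps(4) permutation_permutes by blast
  then have "sign (?t \<circ> \<sigma>) = - sign \<sigma>"
    using swap.hyps by (simp add: sign_compose[OF permutation_swap_id] sign_swap_id)
  moreover have "form_eval m B (w \<circ> (?t \<circ> \<sigma>)) = of_int (sign \<sigma>) * form_eval m B (w \<circ> ?t)"
    unfolding o_assoc by (rule swap.IH)
  moreover have "form_eval m B (w \<circ> ?t) = - form_eval m B w"
    using form_eval_swap[OF B] swap.hyps by simp
  ultimately show ?case by (simp only: of_int_minus mult_minus_left mult_minus_right)
qed

lemma form_eval_repeated:
  fixes B :: "'n::finite list \<Rightarrow> 'a::field_char_0"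
  assumes B: "pform m B" and ij: "i < m" "j < m" "i \<noteq> j" and w: "w i = w j"
  shows "form_eval m B w = 0"
proof -
  have "w \<circ> Transposition.transpose i j = w"
    using w by (auto simp: transpose_def fun_eq_iff)
  then show ?thesis
    using form_eval_swap[OF B ij, of w] by simp
qed

lemma form_eval_slot_linear:
  fixes B :: "'n::finite list \<Rightarrow> 'a::comm_ring_1"
  assumes j: "j < m"
  shows "(\<Sum>c\<in>UNIV. v c * form_eval m B (w(j := \<lambda>d. of_bool (c = d)))) = form_eval m B (w(j := v))"
proof -
  let ?L = "{xs::'n list. length xs = m}"
  define rest where "rest xs = (\<Prod>i\<in>{..<m} - {j}. w i (xs ! i))" for xs :: "'n list"
  have prod_upd: "(\<Prod>i<m. (w(j := z)) i (xs ! i)) = z (xs ! j) * rest xs" for z xs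
    unfolding rest_def using j by (simp add: prod.remove[of "{..<m}" j])
  have "(\<Sum>c\<in>UNIV. v c * form_eval m B (w(j := \<lambda>d. of_bool (c = d))))
      = (\<Sum>c\<in>UNIV. \<Sum>xs\<in>?L. v c * of_bool (c = xs ! j) * (rest xs * B xs))"
    unfolding form_eval_def prod_upd by (simp add: sum_distrib_left mult_ac)
  also have "\<dots> = (\<Sum>xs\<in>?L. \<Sum>c\<in>UNIV. v c * of_bool (c = xs ! j) * (rest xs * B xs))"
    by (rule sum.swap)
  also have "\<dots> = (\<Sum>xs\<in>?L. v (xs ! j) * (rest xs * B xs))"
    by (simp add: sum_mult_of_bool_eq flip: sum_distrib_right)
  also have "\<dots> = form_eval m B (w(j := v))"
    unfolding form_eval_def prod_upd by (simp add: mult_ac)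
  finally show ?thesis .
qed

lemma form_eval_slot_pairing:
  fixes B :: "'n::finite list \<Rightarrow> 'a::field_char_0"
  assumes B: "pform m B" and jl: "j < m" "l < m"
  shows "(\<Sum>c\<in>UNIV. form_eval m B (u(j := \<lambda>d. of_bool (c = d))) * u l c) =
    of_bool (j = l) * form_eval m B u"
proof -
  have "(\<Sum>c\<in>UNIV. form_eval m B (u(j := \<lambda>d. of_bool (c = d))) * u l c) = form_eval m B (u(j := u l))"
    using form_eval_slot_linear[OF jl(1), of "u l" B u] by (simp add: mult.commute)
  also have "\<dots> = of_bool (j = l) * form_eval m B u"
    using form_eval_repeated[OF B jl(1,2), of "u(j := u l)"] by auto
  finally show ?thesis .
qed

lemma sum_cons_eq_form_eval:
  fixes B :: "'n::finite list \<Rightarrow> 'a::comm_ring_1"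
  shows "(\<Sum>cs\<in>{cs. length cs = m}. (\<Prod>i<Suc m. w i ((a # cs) ! i)) * B (b # cs)) =
    w 0 a * form_eval (Suc m) B (w(0 := \<lambda>d. of_bool (b = d)))"
proof -
  let ?L = "{cs::'n list. length cs = m}"
  let ?tail = "\<lambda>cs. \<Prod>i<m. w (Suc i) (cs ! i)"
  have split_head: "(\<Prod>i<Suc m. (w(0 := z)) i ((d # cs) ! i)) = z d * ?tail cs" for z d cs
    by (simp add: prod.lessThan_Suc_shift del: prod.lessThan_Suc)
  have "form_eval (Suc m) B (w(0 := \<lambda>d. of_bool (b = d)))
      = (\<Sum>d\<in>UNIV. \<Sum>cs\<in>?L. of_bool (b = d) * (?tail cs * B (d # cs)))"
    unfolding form_eval_def sum_lists_length_Suc split_head by (simp add: mult_ac)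
  also have "\<dots> = (\<Sum>cs\<in>?L. \<Sum>d\<in>UNIV. of_bool (b = d) * (?tail cs * B (d # cs)))"
    by (rule sum.swap)
  also have "\<dots> = (\<Sum>cs\<in>?L. ?tail cs * B (b # cs))"
    by (simp add: sum_of_bool_mult_eq)
  finally show ?thesis
    using split_head[of "w 0" a] by (simp add: sum_distrib_left mult_ac)
qed

lemma sum_permutes_apply_0:
  fixes f :: "nat \<Rightarrow> 'a::comm_ring_1"
  shows "(\<Sum>\<sigma>\<in>{\<sigma>. \<sigma> permutes {..<Suc m}}. f (\<sigma> 0)) = of_nat (fact m) * (\<Sum>j<Suc m. f j)"
proof -
  let ?S = "{Suc 0..<Suc m}"
  have insert_0: "{..<Suc m} = insert 0 ?S"
    by auto
  have "(Transposition.transpose 0 b \<circ> q) 0 = b" if "q permutes ?S" for b q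
    using permutes_not_in[OF that, of 0] by simp
  then have "(\<Sum>\<sigma>\<in>{\<sigma>. \<sigma> permutes {..<Suc m}}. f (\<sigma> 0)) = (\<Sum>b\<in>insert 0 ?S. \<Sum>q\<in>{q. q permutes ?S}. f b)"
    unfolding insert_0 by (simp add: sum_over_permutations_insert)
  also have "\<dots> = (\<Sum>b\<in>insert 0 ?S. of_nat (fact m) * f b)"
    using card_permutations[of ?S m] by simp
  finally show ?thesis
    by (simp only: insert_0 sum_distrib_left)
qed

definition partial_contr :: "nat \<Rightarrow> ('n::finite list \<Rightarrow> 'a::field) \<Rightarrow> ('n list \<Rightarrow> 'a) \<Rightarrow> 'n \<Rightarrow> 'n \<Rightarrow> 'a" where
  "partial_contr p A B a b = (\<Sum>cs\<in>{cs. length cs = p - 1}. A (a # cs) * B (b # cs))"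

lemma tr_partial_contr:
  assumes "0 < p"
  shows "tr (partial_contr p A B) = full_contr p A B"
proof -
  obtain m where "p = Suc m"
    using assms gr0_implies_Suc by blast
  then show ?thesis
    unfolding tr_def partial_contr_def full_contr_def by (simp add: sum_lists_length_Suc)
qed

lemma Tmat_eq_partial_contr:
  "Tmat p A B a b = partial_contr p A B a b - full_contr p A B / (2 * of_nat p) * of_bool (a = b)"
  unfolding Tmat_def partial_contr_def by simp

lemma partial_contr_simple:
  fixes A B :: "'n::finite list \<Rightarrow> 'a::field_char_0"
  assumes B: "pform (Suc m) B"
    and A: "\<And>xs. length xs = Suc m \<Longrightarrow> A xs = 1 / fact (Suc m) *
      (\<Sum>\<sigma>\<in>{\<sigma>. \<sigma> permutes {..<Suc m}}. of_int (sign \<sigma>) * (\<Prod>i<Suc m. u (\<sigma> i) (xs ! i)))"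
  shows "partial_contr (Suc m) A B a b =
    (\<Sum>j<Suc m. u j a * form_eval (Suc m) B (u(j := \<lambda>d. of_bool (b = d)))) / of_nat (Suc m)"
proof -
  let ?P = "{\<sigma>. \<sigma> permutes {..<Suc m}}"
  let ?L = "{cs::'n list. length cs = m}"
  let ?\<beta> = "\<lambda>j. form_eval (Suc m) B (u(j := \<lambda>d. of_bool (b = d)))"
  let ?term = "\<lambda>\<sigma> cs. (\<Prod>i<Suc m. u (\<sigma> i) ((a # cs) ! i)) * B (b # cs)"
  have term_sum: "(\<Sum>cs\<in>?L. ?term \<sigma> cs) = of_int (sign \<sigma>) * (u (\<sigma> 0) a * ?\<beta> (\<sigma> 0))"
    if \<sigma>: "\<sigma> \<in> ?P" for \<sigma>
  proof -
    have "(u \<circ> \<sigma>)(0 := \<lambda>d. of_bool (b = d)) = u(\<sigma> 0 := \<lambda>d. of_bool (b = d)) \<circ> \<sigma>"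
      using permutes_inj[of \<sigma> "{..<Suc m}"] \<sigma> by (auto simp: fun_eq_iff inj_eq)
    then show ?thesis
      using sum_cons_eq_form_eval[where w = "u \<circ> \<sigma>"] form_eval_permute[OF B, of \<sigma>] \<sigma> by simp
  qed
  have "partial_contr (Suc m) A B a b = (\<Sum>cs\<in>?L. \<Sum>\<sigma>\<in>?P. 1 / fact (Suc m) * of_int (sign \<sigma>) * ?term \<sigma> cs)"
    unfolding partial_contr_def by (simp add: A sum_distrib_left sum_distrib_right mult_ac)
  also have "\<dots> = 1 / fact (Suc m) * (\<Sum>\<sigma>\<in>?P. of_int (sign \<sigma>) * (\<Sum>cs\<in>?L. ?term \<sigma> cs))"
    by (subst sum.swap) (simp add: sum_distrib_left mult_ac)
  also have "\<dots> = 1 / fact (Suc m) * (\<Sum>\<sigma>\<in>?P. u (\<sigma> 0) a * ?\<beta> (\<sigma> 0))"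
    using term_sum by (simp add: mult.assoc[symmetric] flip: of_int_mult)
  also have "\<dots> = 1 / fact (Suc m) * (of_nat (fact m) * (\<Sum>j<Suc m. u j a * ?\<beta> j))"
    by (subst sum_permutes_apply_0) (rule refl)
  also have "\<dots> = (\<Sum>j<Suc m. u j a * ?\<beta> j) / of_nat (Suc m)"
    by (simp add: field_simps del: of_nat_Suc)
  finally show ?thesis .
qed

lemma dyadic_sum_square:
  fixes M :: "'n::finite \<Rightarrow> 'n \<Rightarrow> 'a::field" and u v :: "nat \<Rightarrow> 'n \<Rightarrow> 'a"
  assumes M: "\<And>a b. M a b = (\<Sum>j<p. u j a * v j b) / r"
    and dual: "\<And>j l. j < p \<Longrightarrow> l < p \<Longrightarrow> (\<Sum>c\<in>UNIV. v j c * u l c) = of_bool (j = l) * C"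
  shows "(\<Sum>c\<in>UNIV. M a c * M c b) = C / r * M a b"
proof -
  have diagonal: "(\<Sum>l<p. u j a * v l b * (\<Sum>c\<in>UNIV. v j c * u l c)) = C * (u j a * v j b)"
    if "j < p" for j
  proof -
    have "(\<Sum>l<p. u j a * v l b * (\<Sum>c\<in>UNIV. v j c * u l c)) = (\<Sum>l<p. of_bool (j = l) * (u j a * v l b * C))"
      using that by (intro sum.cong) (simp_all add: dual)
    then show ?thesis
      using that by simp
  qed
  have "M a c * M c b = (\<Sum>j<p. \<Sum>l<p. u j a * v l b * (v j c * u l c)) / r\<^sup>2" for c
    unfolding M times_divide_times_eq sum_product by (simp add: power2_eq_square mult_ac)
  then have "(\<Sum>c\<in>UNIV. M a c * M c b) = (\<Sum>c\<in>UNIV. \<Sum>j<p. \<Sum>l<p. u j a * v l b * (v j c * u l c)) / r\<^sup>2"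
    by (simp add: sum_divide_distrib)
  also have "\<dots> = (\<Sum>j<p. \<Sum>l<p. u j a * v l b * (\<Sum>c\<in>UNIV. v j c * u l c)) / r\<^sup>2"
    by (simp add: sum_distrib_left sum.swap[of _ UNIV])
  also have "\<dots> = (\<Sum>j<p. C * (u j a * v j b)) / r\<^sup>2"
    by (simp add: diagonal)
  also have "\<dots> = C / r * M a b"
    unfolding M by (simp add: power2_eq_square flip: sum_distrib_left)
  finally show ?thesis .
qed

lemma dyadic_sum_trace:
  fixes M :: "'n::finite \<Rightarrow> 'n \<Rightarrow> 'a::field" and u v :: "nat \<Rightarrow> 'n \<Rightarrow> 'a"
  assumes M: "\<And>a b. M a b = (\<Sum>j<p. u j a * v j b) / r"
    and dual: "\<And>j. j < p \<Longrightarrow> (\<Sum>c\<in>UNIV. v j c * u j c) = C"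
  shows "tr M = of_nat p * C / r"
proof -
  have "tr M = (\<Sum>j<p. \<Sum>c\<in>UNIV. v j c * u j c) / r"
    unfolding tr_def M by (simp add: sum_divide_distrib sum.swap[of _ UNIV] mult.commute)
  then show ?thesis
    using dual by simp
qed

lemma partial_contr_square:
  fixes A B :: "'n::finite list \<Rightarrow> 'a::field_char_0"
  assumes "0 < p" and B: "pform p B" and A: "simple_form p A"
  shows "(\<Sum>c\<in>UNIV. partial_contr p A B a c * partial_contr p A B c b) =
    full_contr p A B / of_nat p * partial_contr p A B a b"
proof -
  obtain m where p: "p = Suc m"
    using \<open>0 < p\<close> gr0_implies_Suc by blast
  obtain u :: "nat \<Rightarrow> 'n \<Rightarrow> 'a" where u: "\<And>xs. length xs = p \<Longrightarrow> A xs = 1 / fact p *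
      (\<Sum>\<sigma>\<in>{\<sigma>. \<sigma> permutes {..<p}}. of_int (sign \<sigma>) * (\<Prod>i<p. u (\<sigma> i) (xs ! i)))"
    using A unfolding simple_form_def by blast
  let ?v = "\<lambda>j b. form_eval p B (u(j := \<lambda>d. of_bool (b = d)))"
  have M: "partial_contr p A B a b = (\<Sum>j<p. u j a * ?v j b) / of_nat p" for a b
    using partial_contr_simple[of m B A u] B u unfolding p by simp
  have dual: "(\<Sum>c\<in>UNIV. ?v j c * u l c) = of_bool (j = l) * form_eval p B u" if "j < p" "l < p" for j l
    using form_eval_slot_pairing[OF B that] .
  have "full_contr p A B = tr (partial_contr p A B)"
    using tr_partial_contr[OF \<open>0 < p\<close>] by (rule sym)
  also have "\<dots> = form_eval p B u"
    using dyadic_sum_trace[of "partial_contr p A B", OF M, of "form_eval p B u"] dual \<open>0 < p\<close>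
    by simp
  finally have "full_contr p A B = form_eval p B u" .
  then show ?thesis
    using dyadic_sum_square[of "partial_contr p A B", OF M dual] by simp
qed

lemma square_minus_scalar:
  fixes M :: "'n::finite \<Rightarrow> 'n \<Rightarrow> 'a::comm_ring_1"
  assumes "\<And>a b. (\<Sum>c\<in>UNIV. M a c * M c b) = 2 * h * M a b"
  shows "(\<Sum>c\<in>UNIV. (M a c - h * of_bool (a = c)) * (M c b - h * of_bool (c = b))) = h\<^sup>2 * of_bool (a = b)"
proof -
  have "(M a c - h * of_bool (a = c)) * (M c b - h * of_bool (c = b)) =
      M a c * M c b - h * (of_bool (a = c) * M c b) - h * (M a c * of_bool (c = b))
      + h\<^sup>2 * (of_bool (a = c) * of_bool (c = b))" for c
    by (simp add: algebra_simps power2_eq_square)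
  then show ?thesis
    by (simp add: sum.distrib sum_subtractf assms flip: sum_distrib_left)
qed

lemma Tmat_square:
  fixes A B :: "'n::finite list \<Rightarrow> 'a::field_char_0"
  assumes "0 < p" and "pform p B" and "simple_form p A"
  shows "(\<Sum>c\<in>UNIV. Tmat p A B a c * Tmat p A B c b) =
    (full_contr p A B / (2 * of_nat p))\<^sup>2 * of_bool (a = b)"
proof -
  have "(\<Sum>c\<in>UNIV. partial_contr p A B a c * partial_contr p A B c b) =
      2 * (full_contr p A B / (2 * of_nat p)) * partial_contr p A B a b" for a b
    using partial_contr_square[OF assms] \<open>0 < p\<close> by simp
  then show ?thesis
    unfolding Tmat_eq_partial_contr by (rule square_minus_scalar)
qed

lemma tr_Tmat:
  fixes A B :: "'n::finite list \<Rightarrow> 'a::field_char_0"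
  assumes "0 < p"
  shows "tr (Tmat p A B) = - (full_contr p A B / (2 * of_nat p)) * (of_nat CARD('n) - 2 * of_nat p)"
proof -
  have "tr (Tmat p A B) = full_contr p A B - of_nat CARD('n) * (full_contr p A B / (2 * of_nat p))"
    using tr_partial_contr[OF assms, of A B]
    unfolding tr_def Tmat_eq_partial_contr by (simp add: sum_subtractf)
  then show ?thesis
    using assms by (simp add: field_simps)
qed

lemma tpow_Suc_Suc:
  fixes T :: "'n::finite \<Rightarrow> 'n \<Rightarrow> 'a::comm_ring_1"
  assumes sq: "\<And>a b. (\<Sum>c\<in>UNIV. T a c * T c b) = q * of_bool (a = b)"
  shows "tpow T (Suc (Suc k)) a b = q * tpow T k a b"
proof -
  have "tpow T (Suc (Suc k)) a b = (\<Sum>c\<in>UNIV. \<Sum>d\<in>UNIV. T a c * T c d * tpow T k d b)"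
    by (simp add: sum_distrib_left mult.assoc)
  also have "\<dots> = (\<Sum>d\<in>UNIV. (\<Sum>c\<in>UNIV. T a c * T c d) * tpow T k d b)"
    by (subst sum.swap) (simp add: sum_distrib_right)
  also have "\<dots> = q * tpow T k a b"
    by (simp add: sq mult.assoc flip: sum_distrib_left)
  finally show ?thesis .
qed

lemma tpow_even:
  fixes T :: "'n::finite \<Rightarrow> 'n \<Rightarrow> 'a::comm_ring_1"
  assumes "\<And>a b. (\<Sum>c\<in>UNIV. T a c * T c b) = q * of_bool (a = b)"
  shows "tpow T (2 * j) a b = q ^ j * of_bool (a = b)"
proof (induction j arbitrary: a b)
  case 0
  then show ?case by simp
next
  case (Suc j)
  then show ?case
    using tpow_Suc_Suc[OF assms, of "2 * j" a b] by simp
qed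

lemma tpow_odd:
  fixes T :: "'n::finite \<Rightarrow> 'n \<Rightarrow> 'a::comm_ring_1"
  assumes "\<And>a b. (\<Sum>c\<in>UNIV. T a c * T c b) = q * of_bool (a = b)"
  shows "tpow T (Suc (2 * j)) a b = q ^ j * T a b"
proof (induction j arbitrary: a b)
  case 0
  then show ?case by (simp add: if_distrib[of "(*) _"] cong: if_cong)
next
  case (Suc j)
  then show ?case
    using tpow_Suc_Suc[OF assms, of "Suc (2 * j)" a b] by simp
qed

lemma tr_tpow_even:
  fixes T :: "'n::finite \<Rightarrow> 'n \<Rightarrow> 'a::comm_ring_1"
  assumes "\<And>a b. (\<Sum>c\<in>UNIV. T a c * T c b) = q * of_bool (a = b)"
  shows "tr (tpow T (2 * j)) = of_nat CARD('n) * q ^ j"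
  unfolding tr_def tpow_even[OF assms] by simp

lemma tr_tpow_odd:
  fixes T :: "'n::finite \<Rightarrow> 'n \<Rightarrow> 'a::comm_ring_1"
  assumes "\<And>a b. (\<Sum>c\<in>UNIV. T a c * T c b) = q * of_bool (a = b)"
  shows "tr (tpow T (Suc (2 * j))) = q ^ j * tr T"
  unfolding tr_def tpow_odd[OF assms] by (simp add: sum_distrib_left)

theorem corollary1:
  fixes A B :: "'n::finite list \<Rightarrow> 'a::field_char_0" and p k :: nat
  assumes "p \<ge> 1"
    and "pform p A" and "pform p B"
    and "simple_form p A"
    and "CARD('n) \<noteq> 2 * p"
    and "k \<ge> 1"
  shows "tr (tpow (Tmat p A B) k) =
    (if even k
     then of_nat CARD('n) / (of_nat CARD('n) - 2 * of_nat p) ^ k * (tr (Tmat p A B)) ^ k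
     else 1 / (of_nat CARD('n) - 2 * of_nat p) ^ (k - 1) * (tr (Tmat p A B)) ^ k)"
proof -
  have "0 < p"
    using assms(1) by simp
  define h :: 'a where "h = full_contr p A B / (2 * of_nat p)"
  define d :: 'a where "d = of_nat CARD('n) - 2 * of_nat p"
  have "d \<noteq> 0"
    using assms(5) of_nat_eq_iff[of "CARD('n)" "2 * p", where 'a = 'a] by (simp add: d_def)
  have sq: "\<And>a b. (\<Sum>c\<in>UNIV. Tmat p A B a c * Tmat p A B c b) = h\<^sup>2 * of_bool (a = b)"
    using Tmat_square[OF \<open>0 < p\<close> assms(3,4)] unfolding h_def .
  have tr: "tr (Tmat p A B) = - h * d"
    unfolding h_def d_def by (rule tr_Tmat[OF \<open>0 < p\<close>])
  show ?thesis
  proof (cases "even k")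
    case True
    then obtain j where k: "k = 2 * j" ..
    show ?thesis
      using tr_tpow_even[OF sq, of j] tr \<open>d \<noteq> 0\<close> True unfolding k d_def[symmetric]
      by (simp add: power_mult_distrib power_mult[symmetric] field_simps)
  next
    case False
    then obtain j where k: "k = Suc (2 * j)"
      using oddE by fastforce
    show ?thesis
      using tr_tpow_odd[OF sq, of j] tr \<open>d \<noteq> 0\<close> False unfolding k d_def[symmetric]
      by (simp add: power_mult_distrib power_mult[symmetric] field_simps)
  qed
qed

end
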